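(* Let $0<p<1$ and let $A\subseteq \mathbb{R}^n$. For every $x\in p\text{-conv}(A)$ with $x\neq 0$ there exist linearly independent vectors $P_1,\ldots,P_k\in A$ with $k\le n$ such that $x\in p\text{-conv}\{P_1,\ldots,P_k\}$. Moreover, if $0\in p\text{-conv}(A)$, then there exist $P_1,\ldots,P_k\in A$ with $k\le n+1$ such that $0\in p\text{-conv}\{P_1,\ldots,P_k\}$.
   Context: Let $0<p<1$ and let $X$ be a real vector space. A set $B\subseteq X$ is called $p$-convex if $\lambda x+\mu y\in B$ whenever $x,y\in B$ and $\lambda,\mu\ge 0$ with $\lambda^p+\mu^p=1$. For $A\subseteq X$, the $p$-convex hull $p\text{-conv}(A)$ is the intersection of all $p$-convex subsets of $X$ containing $A$. *)

theory Defs
  imports "HOL-Analysis.Analysis"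
begin

definition p_convex :: "real \<Rightarrow> 'a::real_vector set \<Rightarrow> bool" where
  "p_convex p B \<longleftrightarrow>
     (\<forall>x\<in>B. \<forall>y\<in>B. \<forall>a b. a \<ge> 0 \<and> b \<ge> 0 \<and> a powr p + b powr p = 1
        \<longrightarrow> a *\<^sub>R x + b *\<^sub>R y \<in> B)"

definition p_conv :: "real \<Rightarrow> 'a::real_vector set \<Rightarrow> 'a set" where
  "p_conv p A = \<Inter> {B. p_convex p B \<and> A \<subseteq> B}"

end

theory Submission
  imports Defs
begin

(* The combinations  x = Sum l_i P_i  of finitely many P_i in A with l_i >= 0,  Sum l_i^p <= 1
   and  Sum l_i > 0  form a p-convex set, because t |-> t^p is subadditive; so they contain
   p-conv A.  Conversely such a combination with all l_i > 0 lies in the p-convex hull of its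
   support: a p-convex set is closed under normalised combinations (Sum l_i^p = 1) and under
   shrinking x |-> s x for 0 < s <= 1.
   Now take a representation of x whose support is as small as possible.  A relation
   Sum m_i P_i = 0 on the support lets one move the coefficients along l + t m until one of them
   vanishes; as t |-> Sum (l_i + t m_i)^p is concave, at one of the two ends of the admissible
   interval the constraint Sum l_i^p <= 1 survives, which contradicts minimality as long as
   Sum l_i stays positive.  For x /= 0 this is automatic, so the support is linearly independent.
   For x = 0 it holds for affine relations (Sum m_i = 0), so the support is affinely independent
   and has at most n + 1 points. *)

lemma powr_ge_self:
  fixes u p :: real
  assumes "0 \<le> u" "u \<le> 1" "0 < p" "p \<le> 1"
  shows "u \<le> u powr p"
proof (cases "u = 0")
  case False
  with assms have "u powr 1 \<le> u powr p" by (intro powr_mono') auto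
  with assms show ?thesis by simp
qed simp

lemma powr_add_le:
  fixes a b p :: real
  assumes "0 \<le> a" "0 \<le> b" "0 < p" "p \<le> 1"
  shows "(a + b) powr p \<le> a powr p + b powr p"
proof (cases "a + b = 0")
  case False
  with assms have s: "0 < a + b" by simp
  have "1 = a / (a + b) + b / (a + b)"
    using s by (simp add: add_divide_distrib[symmetric])
  also have "\<dots> \<le> (a / (a + b)) powr p + (b / (a + b)) powr p"
    using assms s by (intro add_mono powr_ge_self) auto
  also have "\<dots> = (a powr p + b powr p) / (a + b) powr p"
    using assms s by (simp add: powr_divide add_divide_distrib)
  finally show ?thesis using s by (simp add: field_simps)
qed (use assms in auto)

lemma concave_on_powr:
  fixes p :: real
  assumes "0 \<le> p" "p \<le> 1"
  shows "concave_on {0<..} (\<lambda>x. x powr p)"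
proof (rule f''_le0_imp_concave[where f' = "\<lambda>x. p * x powr (p - 1)"
      and f'' = "\<lambda>x. p * ((p - 1) * x powr (p - 2))"])
  fix x :: real
  assume "x \<in> {0<..}"
  then have x: "0 < x" by simp
  then show "((\<lambda>x. x powr p) has_real_derivative p * x powr (p - 1)) (at x)"
    and "((\<lambda>x. p * x powr (p - 1)) has_real_derivative p * ((p - 1) * x powr (p - 2))) (at x)"
    by (auto intro!: derivative_eq_intros simp: algebra_simps)
  show "p * ((p - 1) * x powr (p - 2)) \<le> 0"
    using assms by (intro mult_nonneg_nonpos mult_nonpos_nonneg) auto
qed (rule convex_real_interval)

lemma powr_convex_comb_le:
  fixes a b t p :: real
  assumes "0 \<le> a" "0 \<le> b" "0 \<le> t" "t \<le> 1" "0 < p" "p \<le> 1"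
  shows "t * a powr p + (1 - t) * b powr p \<le> (t * a + (1 - t) * b) powr p"
proof -
  have scaled: "s * c powr p \<le> (s * c) powr p" if "0 \<le> s" "s \<le> 1" "0 \<le> c" for s c :: real
  proof -
    have "s * c powr p \<le> s powr p * c powr p"
      using that assms by (intro mult_right_mono powr_ge_self) auto
    with that show ?thesis by (simp add: powr_mult)
  qed
  consider "a = 0" | "b = 0" | "0 < a" "0 < b" using assms by linarith
  then show ?thesis
  proof cases
    case 1
    with scaled[of "1 - t" b] assms show ?thesis by simp
  next
    case 2
    with scaled[of t a] assms show ?thesis by simp
  next
    case 3
    with concave_onD[OF concave_on_powr, of p "1 - t" a b] assms show ?thesis by simp
  qed
qed

lemma sum_powr_divide_root:
  fixes l :: "'b \<Rightarrow> real"
  assumes "0 < p" "0 < s" "\<forall>i\<in>I. 0 \<le> l i"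
  shows "(\<Sum>i\<in>I. (l i / s powr (1 / p)) powr p) = (\<Sum>i\<in>I. l i powr p) / s"
proof -
  have "(\<Sum>i\<in>I. (l i / s powr (1 / p)) powr p) = (\<Sum>i\<in>I. l i powr p / s)"
    using assms by (intro sum.cong) (simp_all add: powr_divide powr_powr)
  then show ?thesis by (simp add: sum_divide_distrib)
qed

lemma p_convex_sum:
  fixes B :: "'a::real_vector set"
  assumes "p_convex p B" "0 < p"
    and "finite I" "I \<noteq> {}" "I \<subseteq> B" "\<forall>i\<in>I. 0 < l i" "(\<Sum>i\<in>I. l i powr p) = 1"
  shows "(\<Sum>i\<in>I. l i *\<^sub>R i) \<in> B"
  using assms(3-)
proof (induction I arbitrary: l rule: finite_ne_induct)
  case (singleton j)
  have "0 < l j" using singleton by simp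
  with \<open>0 < p\<close> have "l j = (l j powr p) powr (1 / p)"
    by (simp add: powr_powr)
  also have "\<dots> = 1" using singleton by simp
  finally show ?case using singleton by simp
next
  case (insert j F)
  define L where "L = (\<Sum>i\<in>F. l i powr p)"
  define c where "c = L powr (1 / p)"
  have "0 < L" unfolding L_def using insert by (intro sum_pos) auto
  then have c: "0 < c" "c powr p = L" using \<open>0 < p\<close> by (simp_all add: c_def powr_powr)
  have "(\<Sum>i\<in>F. (l i / c) powr p) = 1"
    using sum_powr_divide_root[of p L F l] \<open>0 < p\<close> \<open>0 < L\<close> insert.prems
    by (simp add: c_def L_def less_imp_le)
  then have "(\<Sum>i\<in>F. (l i / c) *\<^sub>R i) \<in> B"
    using insert c by (intro insert.IH) auto
  moreover have "l j powr p + c powr p = 1"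
    using insert c by (simp add: L_def)
  ultimately have "l j *\<^sub>R j + c *\<^sub>R (\<Sum>i\<in>F. (l i / c) *\<^sub>R i) \<in> B"
    using assms(1) insert.prems c unfolding p_convex_def by (simp add: less_imp_le)
  then show ?case
    using insert.hyps c by (simp add: scaleR_sum_right)
qed

lemma p_convex_scaleR_ge:
  fixes B :: "'a::real_vector set"
  assumes "p_convex p B" "0 < p" "x \<in> B" "2 powr (1 - 1 / p) \<le> u" "u \<le> 1"
  shows "u *\<^sub>R x \<in> B"
proof -
  \<comment> \<open>\<open>g c = a + b\<close> at the point \<open>(a, b) = (c powr (1 / p), (1 - c) powr (1 / p))\<close>
    of the arc \<open>a powr p + b powr p = 1\<close>\<close>
  define g where "g c = c powr (1 / p) + (1 - c) powr (1 / p)" for c :: real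
  have "continuous_on {0..1/2} g"
    unfolding g_def using \<open>0 < p\<close> by (intro continuous_on_add continuous_on_powr' continuous_intros) auto
  moreover have "g (1/2) = 2 powr (1 - 1 / p)" "g 0 = 1"
    by (simp_all add: g_def powr_diff powr_divide)
  ultimately obtain c where c: "0 \<le> c" "c \<le> 1/2" "g c = u"
    using IVT2'[of g "1/2" u 0] assms by auto
  have "(c powr (1 / p)) powr p + ((1 - c) powr (1 / p)) powr p = 1"
    using c \<open>0 < p\<close> by (simp add: powr_powr)
  then have "c powr (1 / p) *\<^sub>R x + (1 - c) powr (1 / p) *\<^sub>R x \<in> B"
    using assms(1,3) unfolding p_convex_def by simp
  with c show ?thesis by (simp add: g_def flip: scaleR_add_left)
qed

lemma p_convex_scaleR:
  fixes B :: "'a::real_vector set"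
  assumes "p_convex p B" "0 < p" "p < 1" "x \<in> B" "0 < s" "s \<le> 1"
  shows "s *\<^sub>R x \<in> B"
proof -
  define r :: real where "r = 2 powr (1 - 1 / p)"
  have r: "0 < r" "r < 1"
    using assms by (auto simp: r_def field_simps intro!: powr_less_one)
  have "u *\<^sub>R y \<in> B" if "y \<in> B" "r ^ n \<le> u" "u \<le> 1" for n u y
    using that
  proof (induction n arbitrary: u y)
    case (Suc n)
    show ?case
    proof (cases "r \<le> u")
      case True
      with Suc.prems assms show ?thesis by (intro p_convex_scaleR_ge) (auto simp: r_def)
    next
      case False
      have "r *\<^sub>R y \<in> B"
        using Suc.prems assms r by (intro p_convex_scaleR_ge) (auto simp: r_def)
      moreover have "r ^ n \<le> u / r" "u / r \<le> 1"
        using Suc.prems False r by (auto simp: field_simps)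
      ultimately have "(u / r) *\<^sub>R (r *\<^sub>R y) \<in> B" by (rule Suc.IH)
      with r show ?thesis by simp
    qed
  qed simp
  moreover obtain n where "r ^ n < s"
    using real_arch_pow_inv[of s r] assms r by auto
  ultimately show ?thesis using assms by (meson less_imp_le)
qed

definition p_comb :: "real \<Rightarrow> 'a::real_vector set \<Rightarrow> ('a \<Rightarrow> real) \<Rightarrow> 'a \<Rightarrow> bool" where
  "p_comb p I l x \<longleftrightarrow>
     finite I \<and> (\<forall>i\<in>I. 0 \<le> l i) \<and> (\<Sum>i\<in>I. l i powr p) \<le> 1 \<and> (\<Sum>i\<in>I. l i *\<^sub>R i) = x"

lemma p_comb_in_p_conv:
  assumes "0 < p" "p < 1" "p_comb p I l x" "I \<noteq> {}" "\<forall>i\<in>I. 0 < l i"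
  shows "x \<in> p_conv p I"
  unfolding p_conv_def
proof (intro InterI, clarify)
  fix B assume B: "p_convex p B" "I \<subseteq> B"
  define s where "s = (\<Sum>i\<in>I. l i powr p)"
  define c where "c = s powr (1 / p)"
  from assms have s: "0 < s" "s \<le> 1" by (auto simp: s_def p_comb_def intro!: sum_pos)
  then have c: "0 < c" "c \<le> 1" using assms by (auto simp: c_def intro: powr_le1)
  have "(\<Sum>i\<in>I. (l i / c) powr p) = 1"
    using sum_powr_divide_root[of p s I l] assms s by (simp add: c_def s_def less_imp_le)
  then have "(\<Sum>i\<in>I. (l i / c) *\<^sub>R i) \<in> B"
    using assms B c by (intro p_convex_sum) (auto simp: p_comb_def)
  then have "c *\<^sub>R (\<Sum>i\<in>I. (l i / c) *\<^sub>R i) \<in> B"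
    using p_convex_scaleR B(1) assms c by blast
  then show "x \<in> B" using c assms(3) by (simp add: scaleR_sum_right p_comb_def)
qed

lemma p_comb_extend:
  assumes "p_comb p I l x" "finite K" "I \<subseteq> K"
  shows "p_comb p K (\<lambda>i. if i \<in> I then l i else 0) x"
    and "(\<Sum>i\<in>K. if i \<in> I then l i else 0) = sum l I"
proof -
  have restrict: "(\<Sum>i\<in>K. if i \<in> I then g i else 0) = sum g I" for g :: "'a \<Rightarrow> 'b::comm_monoid_add"
    using assms by (simp add: sum.inter_restrict[symmetric] Int_absorb1)
  show "(\<Sum>i\<in>K. if i \<in> I then l i else 0) = sum l I" by (rule restrict)
  show "p_comb p K (\<lambda>i. if i \<in> I then l i else 0) x"
    using assms restrict[of "\<lambda>i. l i powr p"] restrict[of "\<lambda>i. l i *\<^sub>R i"]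
    by (simp add: p_comb_def if_distrib[of "\<lambda>t. t powr p"] if_distrib[of "\<lambda>t. t *\<^sub>R _"] cong: if_cong)
qed

lemma p_comb_combine:
  assumes "p_comb p K l x" "p_comb p K m y" "0 < p" "p \<le> 1"
    and "0 \<le> a" "0 \<le> b" "a powr p + b powr p = 1"
  shows "p_comb p K (\<lambda>i. a * l i + b * m i) (a *\<^sub>R x + b *\<^sub>R y)"
proof -
  have "(\<Sum>i\<in>K. (a * l i + b * m i) powr p) \<le> (\<Sum>i\<in>K. a powr p * l i powr p + b powr p * m i powr p)"
    using assms by (intro sum_mono order.trans[OF powr_add_le]) (auto simp: p_comb_def powr_mult)
  also have "\<dots> = a powr p * (\<Sum>i\<in>K. l i powr p) + b powr p * (\<Sum>i\<in>K. m i powr p)"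
    by (simp add: sum.distrib sum_distrib_left)
  also have "\<dots> \<le> a powr p + b powr p"
    using assms by (intro add_mono mult_left_le) (auto simp: p_comb_def)
  finally show ?thesis
    using assms by (auto simp: p_comb_def scaleR_add_left sum.distrib scaleR_sum_right)
qed

lemma p_convex_p_combs:
  assumes "0 < p" "p \<le> 1"
  shows "p_convex p {x. \<exists>I l. I \<subseteq> A \<and> p_comb p I l x \<and> 0 < sum l I}" (is "p_convex p ?C")
  unfolding p_convex_def
proof (intro ballI allI impI)
  fix y z a b
  assume "y \<in> ?C" "z \<in> ?C" and ab: "0 \<le> a \<and> 0 \<le> b \<and> a powr p + b powr p = 1"
  then obtain I l J m where I: "I \<subseteq> A" "p_comb p I l y" "0 < sum l I"
    and J: "J \<subseteq> A" "p_comb p J m z" "0 < sum m J" by blast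
  define K where "K = I \<union> J"
  define l' where "l' = (\<lambda>i. if i \<in> I then l i else 0)"
  define m' where "m' = (\<lambda>i. if i \<in> J then m i else 0)"
  have "finite K" using I J by (simp add: K_def p_comb_def)
  then have l': "p_comb p K l' y" "sum l' K = sum l I"
    and m': "p_comb p K m' z" "sum m' K = sum m J"
    using p_comb_extend[OF I(2)] p_comb_extend[OF J(2)] by (auto simp: K_def l'_def m'_def)
  have "p_comb p K (\<lambda>i. a * l' i + b * m' i) (a *\<^sub>R y + b *\<^sub>R z)"
    using ab by (intro p_comb_combine[OF l'(1) m'(1) assms]) auto
  moreover have "0 < a \<or> 0 < b"
    using ab by (cases "a = 0"; cases "b = 0") auto
  then have "0 < sum (\<lambda>i. a * l' i + b * m' i) K"
    using ab I(3) J(3) l'(2) m'(2)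
    by (auto simp: sum.distrib simp flip: sum_distrib_left intro: add_pos_nonneg add_nonneg_pos)
  moreover have "K \<subseteq> A" using I J by (simp add: K_def)
  ultimately show "a *\<^sub>R y + b *\<^sub>R z \<in> ?C" by blast
qed

lemma p_conv_imp_p_comb:
  assumes "0 < p" "p \<le> 1" "x \<in> p_conv p A"
  obtains I l where "I \<subseteq> A" "p_comb p I l x" "0 < sum l I"
proof -
  have "A \<subseteq> {x. \<exists>I l. I \<subseteq> A \<and> p_comb p I l x \<and> 0 < sum l I}"
  proof
    fix a assume "a \<in> A"
    then have "{a} \<subseteq> A" "p_comb p {a} (\<lambda>_. 1) a" "0 < sum (\<lambda>_. 1::real) {a}"
      by (auto simp: p_comb_def)
    then show "a \<in> {x. \<exists>I l. I \<subseteq> A \<and> p_comb p I l x \<and> 0 < sum l I}" by blast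
  qed
  with p_convex_p_combs[OF assms(1,2)] assms(3) show ?thesis
    using that unfolding p_conv_def by blast
qed

lemma exists_zeroing_step:
  fixes l m :: "'b \<Rightarrow> real"
  assumes "finite I" "\<forall>i\<in>I. 0 < l i" "\<exists>i\<in>I. m i < 0"
  obtains t where "0 < t" "\<forall>i\<in>I. 0 \<le> l i + t * m i" "\<exists>k\<in>I. l k + t * m k = 0"
proof -
  define N where "N = {i\<in>I. m i < 0}"
  define t where "t = Min ((\<lambda>i. l i / - m i) ` N)"
  have N: "finite N" "N \<noteq> {}" using assms by (auto simp: N_def)
  then have "t \<in> (\<lambda>i. l i / - m i) ` N" unfolding t_def by (intro Min_in) auto
  then obtain k where k: "k \<in> N" "t = l k / - m k" by blast
  have le: "t \<le> l i / - m i" if "i \<in> N" for i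
    unfolding t_def using N that by (intro Min_le) auto
  have "0 < l k / - m k" using k assms by (intro divide_pos_pos) (auto simp: N_def)
  with k have "0 < t" by simp
  moreover have "0 \<le> l i + t * m i" if "i \<in> I" for i
  proof (cases "m i < 0")
    case True
    with le[of i] that have "t * - m i \<le> l i" by (simp add: N_def field_simps)
    then show ?thesis by simp
  next
    case False
    with \<open>0 < t\<close> assms that show ?thesis by (simp add: add_pos_nonneg less_imp_le)
  qed
  moreover have "l k + t * m k = 0" using k by (simp add: N_def field_simps)
  moreover have "k \<in> I" using k by (simp add: N_def)
  ultimately show ?thesis using that by blast
qed

lemma sum_powr_le_at_endpoint:
  fixes l n q :: "'b \<Rightarrow> real"
  assumes "0 \<le> \<theta>" "\<theta> \<le> 1" "0 < p" "p \<le> 1" "\<forall>i\<in>I. 0 \<le> n i \<and> 0 \<le> q i"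
    and "\<forall>i\<in>I. l i = \<theta> * n i + (1 - \<theta>) * q i"
  shows "(\<Sum>i\<in>I. n i powr p) \<le> (\<Sum>i\<in>I. l i powr p) \<or> (\<Sum>i\<in>I. q i powr p) \<le> (\<Sum>i\<in>I. l i powr p)"
proof -
  have "\<theta> * (\<Sum>i\<in>I. n i powr p) + (1 - \<theta>) * (\<Sum>i\<in>I. q i powr p)
      = (\<Sum>i\<in>I. \<theta> * n i powr p + (1 - \<theta>) * q i powr p)"
    (is "\<theta> * ?N + (1 - \<theta>) * ?Q = _") by (simp add: sum.distrib sum_distrib_left)
  also have "\<dots> \<le> (\<Sum>i\<in>I. l i powr p)"
    using assms by (intro sum_mono) (simp add: powr_convex_comb_le)
  finally show ?thesis
    using convex_bound_lt[of "- ?N" "- (\<Sum>i\<in>I. l i powr p)" "- ?Q" \<theta> "1 - \<theta>"] assms(1,2)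
    by linarith
qed

lemma zeroing_step_powr_sum_le:
  fixes l m :: "'b \<Rightarrow> real"
  assumes "finite I" "\<forall>i\<in>I. 0 < l i" "\<exists>i\<in>I. m i < 0" "0 < p" "p \<le> 1"
  obtains t where "\<forall>i\<in>I. 0 \<le> l i + t * m i" "\<exists>k\<in>I. l k + t * m k = 0"
    "(\<Sum>i\<in>I. (l i + t * m i) powr p) \<le> (\<Sum>i\<in>I. l i powr p)"
proof -
  obtain t where t: "0 < t" "\<forall>i\<in>I. 0 \<le> l i + t * m i" "\<exists>k\<in>I. l k + t * m k = 0"
    using exists_zeroing_step assms(1-3) by blast
  show ?thesis
  proof (cases "\<exists>i\<in>I. 0 < m i")
    case False
    then have "(\<Sum>i\<in>I. (l i + t * m i) powr p) \<le> (\<Sum>i\<in>I. l i powr p)"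
      using t assms by (intro sum_mono powr_mono2) (auto simp: not_less mult_nonneg_nonpos)
    with t that show ?thesis by blast
  next
    case True
    then obtain s where s: "0 < s" "\<forall>i\<in>I. 0 \<le> l i + - s * m i" "\<exists>k\<in>I. l k + - s * m k = 0"
      using exists_zeroing_step[of I l "\<lambda>i. - m i"] assms by auto
    define \<theta> where "\<theta> = s / (s + t)"
    have "\<theta> * t = (1 - \<theta>) * s" using s t by (simp add: \<theta>_def field_simps)
    moreover have "\<theta> * (l i + t * m i) + (1 - \<theta>) * (l i + - s * m i) = l i + (\<theta> * t - (1 - \<theta>) * s) * m i"
      for i by (simp add: algebra_simps)
    ultimately have "l i = \<theta> * (l i + t * m i) + (1 - \<theta>) * (l i + - s * m i)" for i
      by simp
    moreover have "0 \<le> \<theta>" "\<theta> \<le> 1" using s t by (auto simp: \<theta>_def)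
    ultimately have "(\<Sum>i\<in>I. (l i + t * m i) powr p) \<le> (\<Sum>i\<in>I. l i powr p)
        \<or> (\<Sum>i\<in>I. (l i + - s * m i) powr p) \<le> (\<Sum>i\<in>I. l i powr p)"
      using s t assms by (intro sum_powr_le_at_endpoint) auto
    with s t that show ?thesis by blast
  qed
qed

lemma p_comb_reduce:
  assumes "p_comb p I l x" "\<forall>i\<in>I. 0 < l i" "(\<Sum>i\<in>I. m i *\<^sub>R i) = 0" "\<exists>i\<in>I. m i \<noteq> 0"
    "0 < p" "p \<le> 1"
  obtains t where "p_comb p I (\<lambda>i. l i + t * m i) x" "\<exists>k\<in>I. l k + t * m k = 0"
proof -
  have fin: "finite I" using assms by (simp add: p_comb_def)
  have "\<exists>t. (\<forall>i\<in>I. 0 \<le> l i + t * m i) \<and> (\<exists>k\<in>I. l k + t * m k = 0)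
      \<and> (\<Sum>i\<in>I. (l i + t * m i) powr p) \<le> (\<Sum>i\<in>I. l i powr p)"
  proof (cases "\<exists>i\<in>I. m i < 0")
    case True
    obtain t where "\<forall>i\<in>I. 0 \<le> l i + t * m i" "\<exists>k\<in>I. l k + t * m k = 0"
      "(\<Sum>i\<in>I. (l i + t * m i) powr p) \<le> (\<Sum>i\<in>I. l i powr p)"
      by (rule zeroing_step_powr_sum_le[OF fin assms(2) True assms(5,6)])
    then show ?thesis by blast
  next
    case False
    with assms(4) have "\<exists>i\<in>I. - m i < 0" by force
    from zeroing_step_powr_sum_le[OF fin assms(2) this assms(5,6)] obtain t where
      "\<forall>i\<in>I. 0 \<le> l i + t * - m i" "\<exists>k\<in>I. l k + t * - m k = 0"
      "(\<Sum>i\<in>I. (l i + t * - m i) powr p) \<le> (\<Sum>i\<in>I. l i powr p)" .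
    then show ?thesis by (intro exI[of _ "- t"]) simp
  qed
  then obtain t where "\<forall>i\<in>I. 0 \<le> l i + t * m i" "\<exists>k\<in>I. l k + t * m k = 0"
    "(\<Sum>i\<in>I. (l i + t * m i) powr p) \<le> (\<Sum>i\<in>I. l i powr p)" by blast
  moreover have "(\<Sum>i\<in>I. (l i + t * m i) *\<^sub>R i) = (\<Sum>i\<in>I. l i *\<^sub>R i) + t *\<^sub>R (\<Sum>i\<in>I. m i *\<^sub>R i)"
    by (simp add: scaleR_add_left sum.distrib scaleR_sum_right)
  then have "(\<Sum>i\<in>I. (l i + t * m i) *\<^sub>R i) = x"
    using assms by (simp add: p_comb_def)
  ultimately have "p_comb p I (\<lambda>i. l i + t * m i) x"
    using assms(1) by (auto simp: p_comb_def)
  with \<open>\<exists>k\<in>I. l k + t * m k = 0\<close> show ?thesis using that by blast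
qed

lemma p_comb_remove_zero:
  assumes "p_comb p I l x" "l k = 0"
  shows "p_comb p (I - {k}) l x" "sum l (I - {k}) = sum l I"
proof -
  have drop: "sum g (I - {k}) = sum g I" if "g k = 0" for g :: "'a \<Rightarrow> 'b::ab_group_add"
    using assms(1) that by (simp add: p_comb_def sum_diff1)
  show "sum l (I - {k}) = sum l I" by (rule drop) (rule assms(2))
  show "p_comb p (I - {k}) l x"
    using assms drop[of "\<lambda>i. l i powr p"] drop[of "\<lambda>i. l i *\<^sub>R i"] by (simp add: p_comb_def)
qed

lemma p_comb_sum_pos:
  assumes "p_comb p I l x" "x \<noteq> 0"
  shows "0 < sum l I"
proof -
  have "sum l I \<noteq> 0"
  proof
    assume "sum l I = 0"
    with assms(1) have "\<forall>i\<in>I. l i = 0" by (simp add: p_comb_def sum_nonneg_eq_0_iff)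
    with assms show False by (simp add: p_comb_def)
  qed
  with assms(1) show ?thesis by (simp add: p_comb_def order_less_le sum_nonneg)
qed

lemma p_comb_remove_point:
  assumes "0 < p" "p \<le> 1" "p_comb p I l x" "0 < sum l I"
    and "(\<exists>k\<in>I. l k = 0) \<or> (x \<noteq> 0 \<and> dependent I) \<or> affine_dependent I"
  obtains k l' where "k \<in> I" "p_comb p (I - {k}) l' x" "0 < sum l' (I - {k})"
proof (cases "\<exists>k\<in>I. l k = 0")
  case True
  then obtain k where "k \<in> I" "l k = 0" by blast
  with assms(4) p_comb_remove_zero[OF assms(3)] show ?thesis using that by metis
next
  case False
  with assms(3) have pos: "\<forall>i\<in>I. 0 < l i" by (auto simp: p_comb_def order_less_le)
  have "finite I" using assms(3) by (simp add: p_comb_def)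
  with False assms(5) obtain m where m: "(\<Sum>i\<in>I. m i *\<^sub>R i) = 0" "\<exists>i\<in>I. m i \<noteq> 0"
    and "x \<noteq> 0 \<or> sum m I = 0"
    by (auto simp: dependent_finite affine_dependent_explicit_finite)
  obtain t where t: "p_comb p I (\<lambda>i. l i + t * m i) x" "\<exists>k\<in>I. l k + t * m k = 0"
    using p_comb_reduce[OF assms(3) pos m assms(1,2)] .
  then obtain k where k: "k \<in> I" "l k + t * m k = 0" by blast
  have "0 < (\<Sum>i\<in>I. l i + t * m i)"
    using \<open>x \<noteq> 0 \<or> sum m I = 0\<close>
  proof
    assume "x \<noteq> 0"
    with t(1) show ?thesis by (rule p_comb_sum_pos)
  next
    assume "sum m I = 0"
    with assms(4) show ?thesis by (simp add: sum.distrib flip: sum_distrib_left)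
  qed
  with p_comb_remove_zero[OF t(1), of k] k show ?thesis using that by simp
qed

lemma minimal_p_comb:
  assumes "0 < p" "p \<le> 1" "I \<subseteq> A" "p_comb p I l x" "0 < sum l I"
  obtains I l where "I \<subseteq> A" "I \<noteq> {}" "p_comb p I l x" "\<forall>i\<in>I. 0 < l i"
    "x \<noteq> 0 \<Longrightarrow> independent I" "\<not> affine_dependent I"
proof -
  have "\<exists>I l. I \<subseteq> A \<and> I \<noteq> {} \<and> p_comb p I l x \<and> (\<forall>i\<in>I. 0 < l i)
      \<and> (x \<noteq> 0 \<longrightarrow> independent I) \<and> \<not> affine_dependent I"
    using assms(3-5)
  proof (induction I arbitrary: l rule: measure_induct_rule[where f = card])
    case (less I)
    show ?case
    proof (cases "(\<exists>k\<in>I. l k = 0) \<or> (x \<noteq> 0 \<and> dependent I) \<or> affine_dependent I")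
      case True
      then obtain k l' where "k \<in> I" "p_comb p (I - {k}) l' x" "0 < sum l' (I - {k})"
        by (rule p_comb_remove_point[OF assms(1,2) less.prems(2,3)])
      moreover have "finite I" using less.prems by (simp add: p_comb_def)
      ultimately have "card (I - {k}) < card I" by (intro card_Diff1_less)
      with \<open>p_comb p (I - {k}) l' x\<close> \<open>0 < sum l' (I - {k})\<close> less.prems(1) show ?thesis
        by (intro less.IH) auto
    next
      case False
      then have "\<forall>i\<in>I. 0 < l i" using less.prems by (auto simp: p_comb_def order_less_le)
      moreover have "I \<noteq> {}" using less.prems by auto
      ultimately show ?thesis using less.prems False by blast
    qed
  qed
  with that show ?thesis by blast
qed

theorem theorem1:
  fixes p :: real and A :: "'a::euclidean_space set"
  assumes "0 < p" and "p < 1"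
  shows "(\<forall>x\<in>p_conv p A. x \<noteq> 0 \<longrightarrow>
            (\<exists>S. finite S \<and> S \<subseteq> A \<and> independent S \<and> card S \<le> DIM('a)
                 \<and> x \<in> p_conv p S))
       \<and> (0 \<in> p_conv p A \<longrightarrow>
            (\<exists>S. finite S \<and> S \<subseteq> A \<and> card S \<le> DIM('a) + 1
                 \<and> 0 \<in> p_conv p S))"
proof -
  have p: "0 < p" "p \<le> 1" using assms by simp_all
  have minimal: "\<exists>I l. I \<subseteq> A \<and> I \<noteq> {} \<and> p_comb p I l x \<and> (\<forall>i\<in>I. 0 < l i)
      \<and> (x \<noteq> 0 \<longrightarrow> independent I) \<and> \<not> affine_dependent I" if "x \<in> p_conv p A" for x
    by (rule p_conv_imp_p_comb[OF p that], rule minimal_p_comb[OF p]) blast+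
  show ?thesis
  proof (intro conjI ballI impI)
    fix x assume "x \<in> p_conv p A" "x \<noteq> 0"
    with minimal obtain I l where I: "I \<subseteq> A" "I \<noteq> {}" "p_comb p I l x" "\<forall>i\<in>I. 0 < l i"
      and "independent I" by blast
    moreover have "x \<in> p_conv p I" using p_comb_in_p_conv[OF assms I(3,2,4)] .
    ultimately show "\<exists>S. finite S \<and> S \<subseteq> A \<and> independent S \<and> card S \<le> DIM('a) \<and> x \<in> p_conv p S"
      using independent_bound by blast
  next
    assume "0 \<in> p_conv p A"
    with minimal obtain I l where I: "I \<subseteq> A" "I \<noteq> {}" "p_comb p I l 0" "\<forall>i\<in>I. 0 < l i"
      and "\<not> affine_dependent I" by blast
    moreover have "finite I" using I(3) by (simp add: p_comb_def)
    ultimately have "card I \<le> DIM('a) + 1"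
      using affine_dependent_biggerset[of I] by linarith
    moreover have "0 \<in> p_conv p I" using p_comb_in_p_conv[OF assms I(3,2,4)] .
    ultimately show "\<exists>S. finite S \<and> S \<subseteq> A \<and> card S \<le> DIM('a) + 1 \<and> 0 \<in> p_conv p S"
      using I(1) \<open>finite I\<close> by blast
  qed
qed

end
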